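(* Let $r$ be a Hermitian symmetric polynomial in $n$ variables, let $t\mapsto z(t)$ be a holomorphic polynomial mapping $\mathbb{C}\to\mathbb{C}^n$, and let $z^*r$ denote the Hermitian symmetric polynomial in one variable $t\mapsto r(z(t),\overline{z(t)})$. Then: (i) if $r\in\mathcal{Q}(n)$ then $z^*r\in\mathcal{Q}(1)$; (ii) if $r\in\mathcal{Q}'(n)$ then $z^*r\in\mathcal{Q}'(1)$; (iii) for every integer $k\ge1$ and for $k=\infty$, if $r\in\mathcal{P}_k(n)$ then $z^*r\in\mathcal{P}_k(1)$.
   Context: A Hermitian symmetric polynomial in $n$ variables is $r(z,\overline w)=\sum c_{\alpha\beta}z^\alpha\overline w^\beta$ with $c_{\alpha\beta}=\overline{c_{\beta\alpha}}$. For a positive integer $k$, $r\in\mathcal{P}_k(n)$ if for every choice of $k$ points $z_1,\dots,z_k\in\mathbb{C}^n$ the $k\times k$ matrix $(r(z_i,\overline{z_j}))$ is non-negative definite. $r\in\mathcal{P}_\infty(n)$ if $r(z,\overline z)=\|h(z)\|^2$ for some holomorphic polynomial mapping $h$ (with values in some $\mathbb{C}^N$). $\mathcal{Q}(n)$: $r=\|F\|^2/\|G\|^2$ for holomorphic polynomial mappings $F,G$, $G\not\equiv0$. $\mathcal{Q}'(n)$: $r\in\mathcal{P}_1(n)$ and there exist $s\in\mathcal{P}_1(n)$, not identically $0$, and a holomorphic polynomial mapping $F$ with $rs=\|F\|^2$. *)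

theory Defs
  imports Complex_Main "HOL-Computational_Algebra.Polynomial"
begin

text \<open>Multi-indices are functions nat => nat; a multi-index in n variables
vanishes at every index >= n.  Points of C^n are functions nat => complex,
of which only the coordinates 0..n-1 are used.\<close>

type_synonym mindex = "nat \<Rightarrow> nat"

definition mono :: "nat \<Rightarrow> mindex \<Rightarrow> (nat \<Rightarrow> complex) \<Rightarrow> complex" where
  "mono n \<alpha> z = (\<Prod>i<n. z i ^ \<alpha> i)"

definition in_vars :: "nat \<Rightarrow> mindex \<Rightarrow> bool" where
  "in_vars n \<alpha> \<longleftrightarrow> (\<forall>i\<ge>n. \<alpha> i = 0)"

definition is_hpoly :: "nat \<Rightarrow> (mindex \<Rightarrow> complex) \<Rightarrow> bool" where
  "is_hpoly n a \<longleftrightarrow> finite {\<alpha>. a \<alpha> \<noteq> 0} \<and> (\<forall>\<alpha>. a \<alpha> \<noteq> 0 \<longrightarrow> in_vars n \<alpha>)"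

definition hpoly_eval :: "nat \<Rightarrow> (mindex \<Rightarrow> complex) \<Rightarrow> (nat \<Rightarrow> complex) \<Rightarrow> complex" where
  "hpoly_eval n a z = (\<Sum>\<alpha>\<in>{\<alpha>. a \<alpha> \<noteq> 0}. a \<alpha> * mono n \<alpha> z)"

definition is_hpoly_map :: "nat \<Rightarrow> nat \<Rightarrow> (nat \<Rightarrow> mindex \<Rightarrow> complex) \<Rightarrow> bool" where
  "is_hpoly_map n N h \<longleftrightarrow> (\<forall>j<N. is_hpoly n (h j))"

definition map_normsq :: "nat \<Rightarrow> nat \<Rightarrow> (nat \<Rightarrow> mindex \<Rightarrow> complex) \<Rightarrow> (nat \<Rightarrow> complex) \<Rightarrow> real" where
  "map_normsq n N h z = (\<Sum>j<N. (cmod (hpoly_eval n (h j) z))\<^sup>2)"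

text \<open>Hermitian symmetric polynomial r(z, conj w) = sum c_{ab} z^a conj(w)^b
in n variables, given by its coefficients.\<close>
definition is_herm :: "nat \<Rightarrow> (mindex \<Rightarrow> mindex \<Rightarrow> complex) \<Rightarrow> bool" where
  "is_herm n c \<longleftrightarrow> finite {(\<alpha>, \<beta>). c \<alpha> \<beta> \<noteq> 0}
     \<and> (\<forall>\<alpha> \<beta>. c \<alpha> \<beta> \<noteq> 0 \<longrightarrow> in_vars n \<alpha> \<and> in_vars n \<beta>)
     \<and> (\<forall>\<alpha> \<beta>. c \<alpha> \<beta> = cnj (c \<beta> \<alpha>))"

definition herm_eval :: "nat \<Rightarrow> (mindex \<Rightarrow> mindex \<Rightarrow> complex) \<Rightarrow> (nat \<Rightarrow> complex) \<Rightarrow> (nat \<Rightarrow> complex) \<Rightarrow> complex" where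
  "herm_eval n c z w = (\<Sum>(\<alpha>, \<beta>)\<in>{(\<alpha>, \<beta>). c \<alpha> \<beta> \<noteq> 0}. c \<alpha> \<beta> * mono n \<alpha> z * cnj (mono n \<beta> w))"

text \<open>P_k(n): for any k points z_1..z_k the matrix (r(z_i, conj z_j)) is
non-negative definite, i.e. v^* M v is real and >= 0 for every v in C^k.\<close>
definition Pk :: "nat \<Rightarrow> nat \<Rightarrow> (mindex \<Rightarrow> mindex \<Rightarrow> complex) \<Rightarrow> bool" where
  "Pk k n r \<longleftrightarrow> is_herm n r \<and>
     (\<forall>(pts :: nat \<Rightarrow> nat \<Rightarrow> complex) (v :: nat \<Rightarrow> complex).
        let q = (\<Sum>i<k. \<Sum>j<k. cnj (v i) * herm_eval n r (pts i) (pts j) * v j)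
        in Im q = 0 \<and> 0 \<le> Re q)"

definition Pinf :: "nat \<Rightarrow> (mindex \<Rightarrow> mindex \<Rightarrow> complex) \<Rightarrow> bool" where
  "Pinf n r \<longleftrightarrow> is_herm n r \<and>
     (\<exists>N h. is_hpoly_map n N h \<and> (\<forall>z. herm_eval n r z z = complex_of_real (map_normsq n N h z)))"

text \<open>Q(n): r = ||F||^2 / ||G||^2 with G not identically zero, read as
r(z, conj z) ||G(z)||^2 = ||F(z)||^2 for all z.\<close>
definition Qcl :: "nat \<Rightarrow> (mindex \<Rightarrow> mindex \<Rightarrow> complex) \<Rightarrow> bool" where
  "Qcl n r \<longleftrightarrow> is_herm n r \<and>
     (\<exists>N F M G. is_hpoly_map n N F \<and> is_hpoly_map n M G \<and>
        (\<exists>z. map_normsq n M G z \<noteq> 0) \<and>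
        (\<forall>z. herm_eval n r z z * complex_of_real (map_normsq n M G z)
               = complex_of_real (map_normsq n N F z)))"

definition Qcl' :: "nat \<Rightarrow> (mindex \<Rightarrow> mindex \<Rightarrow> complex) \<Rightarrow> bool" where
  "Qcl' n r \<longleftrightarrow> Pk 1 n r \<and>
     (\<exists>s N F. Pk 1 n s \<and> (\<exists>\<alpha> \<beta>. s \<alpha> \<beta> \<noteq> 0) \<and> is_hpoly_map n N F \<and>
        (\<forall>z. herm_eval n r z z * herm_eval n s z z = complex_of_real (map_normsq n N F z)))"

text \<open>The pullback z^*r by the polynomial map t -> (poly (zm 0) t, ..., poly (zm (n-1)) t):
q is z^*r iff q is a Hermitian symmetric polynomial in one variable with
q(t, conj s) = r(z(t), conj z(s)).\<close>
definition is_pullback :: "nat \<Rightarrow> (mindex \<Rightarrow> mindex \<Rightarrow> complex) \<Rightarrow> (nat \<Rightarrow> complex poly)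
     \<Rightarrow> (mindex \<Rightarrow> mindex \<Rightarrow> complex) \<Rightarrow> bool" where
  "is_pullback n r zm q \<longleftrightarrow> is_herm 1 q \<and>
     (\<forall>t s. herm_eval 1 q (\<lambda>_. t) (\<lambda>_. s)
            = herm_eval n r (\<lambda>i. poly (zm i) t) (\<lambda>i. poly (zm i) s))"

end

theory Submission
  imports Defs
begin

text \<open>
  For \<open>P\<^sub>k\<close> and \<open>P\<^sub>\<infinity>\<close> the pullback is immediate: the matrices \<open>(z\<^sup>*r(t\<^sub>i, t\<^sub>j))\<close> are matrices
  \<open>(r(z(t\<^sub>i), z(t\<^sub>j)))\<close>, and \<open>\<parallel>h\<parallel>\<^sup>2\<close> pulls back to \<open>\<parallel>h \<circ> z\<parallel>\<^sup>2\<close>.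

  For \<open>Q\<close> and \<open>Q'\<close> the denominator \<open>\<parallel>G\<parallel>\<^sup>2\<close> (resp. \<open>s\<close>) may vanish identically along the
  curve, so the curve is moved: \<open>z\<^sub>\<epsilon>(t) = z(t) + \<epsilon>c\<close> with real \<open>\<epsilon>\<close> and \<open>c\<close> chosen such that
  \<open>z\<^sub>1(0)\<close> is a point where the denominator does not vanish. Expanding
  \<open>r(z\<^sub>\<epsilon>) \<parallel>G(z\<^sub>\<epsilon>)\<parallel>\<^sup>2 = \<parallel>F(z\<^sub>\<epsilon>)\<parallel>\<^sup>2\<close> in \<open>\<epsilon>\<close>, dividing by the lowest surviving power
  \<open>\<epsilon>\<^sup>2\<^sup>m\<close> and letting \<open>\<epsilon> \<rightarrow> 0\<close> yields \<open>r(z) \<parallel>G\<^sub>m\<parallel>\<^sup>2 = \<parallel>F\<^sub>m\<parallel>\<^sup>2\<close>, where \<open>G\<^sub>m \<noteq> 0\<close> and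
  \<open>F\<^sub>m\<close> are the \<open>\<epsilon>\<^sup>m\<close>-coefficients. For \<open>Q'\<close>, nonnegativity of \<open>s\<close> forces the lowest
  surviving order of \<open>s(z\<^sub>\<epsilon>, z\<^sub>\<epsilon>)\<close> to be even, and its coefficient is a nonzero Hermitian
  polynomial in \<open>t\<close> that is nonnegative on the diagonal.

  The point for \<open>Q'\<close> exists because a nonzero Hermitian polynomial does not vanish identically
  on the diagonal: a Kronecker substitution \<open>z\<^sub>i = t\<^bsup>N\<^sup>i\<^esup>\<close> reduces this to one variable,
  where scaling by real numbers and restricting to the unit circle separate the coefficients.
\<close>

lemma mono_one [simp]: "mono (Suc 0) \<alpha> x = x 0 ^ \<alpha> 0"
  by (simp add: mono_def)

definition unit_index :: "nat \<Rightarrow> mindex" where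
  "unit_index k = (\<lambda>i. if i = 0 then k else 0)"

lemma inj_unit_index: "inj unit_index"
  unfolding inj_def unit_index_def by metis

lemma in_vars_one_iff: "in_vars 1 \<alpha> \<longleftrightarrow> \<alpha> = unit_index (\<alpha> 0)"
  by (auto simp: in_vars_def unit_index_def fun_eq_iff)

lemma herm_eval_one_cong: "herm_eval 1 c x y = herm_eval 1 c (\<lambda>_. x 0) (\<lambda>_. y 0)"
  unfolding herm_eval_def by simp

lemma hpoly_eval_eq_sum_superset:
  "finite S \<Longrightarrow> {\<alpha>. a \<alpha> \<noteq> 0} \<subseteq> S \<Longrightarrow> hpoly_eval n a z = (\<Sum>\<alpha>\<in>S. a \<alpha> * mono n \<alpha> z)"
  unfolding hpoly_eval_def by (rule sum.mono_neutral_left) auto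

lemma herm_eval_eq_sum_superset:
  "finite S \<Longrightarrow> {(\<alpha>, \<beta>). c \<alpha> \<beta> \<noteq> 0} \<subseteq> S \<Longrightarrow>
   herm_eval n c z w = (\<Sum>(\<alpha>, \<beta>)\<in>S. c \<alpha> \<beta> * mono n \<alpha> z * cnj (mono n \<beta> w))"
  unfolding herm_eval_def by (rule sum.mono_neutral_left) auto

definition hpoly_of_poly :: "complex poly \<Rightarrow> mindex \<Rightarrow> complex" where
  "hpoly_of_poly p \<alpha> = (if in_vars 1 \<alpha> then coeff p (\<alpha> 0) else 0)"

lemma hpoly_of_poly_support: "{\<alpha>. hpoly_of_poly p \<alpha> \<noteq> 0} \<subseteq> unit_index ` {..degree p}"
  by (auto simp: hpoly_of_poly_def le_degree split: if_splits intro!: image_eqI[OF in_vars_one_iff[THEN iffD1]])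

lemma is_hpoly_hpoly_of_poly: "is_hpoly 1 (hpoly_of_poly p)"
  unfolding is_hpoly_def
  using finite_subset[OF hpoly_of_poly_support] by (auto simp: hpoly_of_poly_def split: if_splits)

lemma hpoly_eval_hpoly_of_poly [simp]: "hpoly_eval (Suc 0) (hpoly_of_poly p) x = poly p (x 0)"
proof -
  have "hpoly_eval (Suc 0) (hpoly_of_poly p) x = (\<Sum>\<alpha>\<in>unit_index ` {..degree p}. hpoly_of_poly p \<alpha> * x 0 ^ \<alpha> 0)"
    by (simp add: hpoly_eval_eq_sum_superset[OF _ hpoly_of_poly_support])
  also have "\<dots> = (\<Sum>k\<le>degree p. coeff p k * x 0 ^ k)"
    by (subst sum.reindex) (auto intro: inj_on_subset[OF inj_unit_index] simp: hpoly_of_poly_def in_vars_def unit_index_def)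
  finally show ?thesis
    by (simp add: poly_altdef)
qed

lemma is_hpoly_map_hpoly_of_poly: "is_hpoly_map 1 N (\<lambda>j. hpoly_of_poly (P j))"
  unfolding is_hpoly_map_def using is_hpoly_hpoly_of_poly by blast

lemma map_normsq_hpoly_of_poly:
  "map_normsq 1 N (\<lambda>j. hpoly_of_poly (P j)) z = (\<Sum>j<N. (cmod (poly (P j) (z 0)))\<^sup>2)"
  by (simp add: map_normsq_def)

lemma Pk_one_iff:
  "Pk 1 n s \<longleftrightarrow> is_herm n s \<and> (\<forall>p. Im (herm_eval n s p p) = 0 \<and> 0 \<le> Re (herm_eval n s p p))"
proof -
  have quad: "(\<Sum>i<1. \<Sum>j<1. cnj (v i) * herm_eval n s (pts i) (pts j) * v j)
      = of_real ((cmod (v 0))\<^sup>2) * herm_eval n s (pts 0) (pts 0)" for v :: "nat \<Rightarrow> complex" and pts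
    using complex_norm_square[of "v 0"] by (simp add: mult_ac lessThan_Suc)
  have "Im (herm_eval n s p p) = 0 \<and> 0 \<le> Re (herm_eval n s p p)" if "Pk 1 n s" for p
    using that[unfolded Pk_def Let_def quad, THEN conjunct2, rule_format, of "\<lambda>_. 1" "\<lambda>_. p"] by simp
  moreover have "Im (of_real (x\<^sup>2) * h) = 0 \<and> 0 \<le> Re (of_real (x\<^sup>2) * h)" if "Im h = 0 \<and> 0 \<le> Re h" for h x
    using that by simp
  ultimately show ?thesis
    unfolding Pk_def Let_def quad by blast
qed

subsection \<open>Hermitian polynomials in one variable\<close>

definition gram_coeff :: "'i set \<Rightarrow> ('i \<Rightarrow> 'i \<Rightarrow> complex) \<Rightarrow> ('i \<Rightarrow> complex poly) \<Rightarrow> nat \<Rightarrow> nat \<Rightarrow> complex" where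
  "gram_coeff I w P k l = (\<Sum>i\<in>I. \<Sum>j\<in>I. w i j * coeff (P i) k * cnj (coeff (P j) l))"

lemma gram_coeff_eq_0:
  assumes "\<And>i. i \<in> I \<Longrightarrow> degree (P i) \<le> K" "K < k \<or> K < l"
  shows "gram_coeff I w P k l = 0"
proof -
  have "coeff (P i) k * cnj (coeff (P j) l) = 0" if "i \<in> I" "j \<in> I" for i j
    using assms that by (auto intro!: coeff_eq_0 dest!: assms(1) intro: le_less_trans)
  then show ?thesis
    unfolding gram_coeff_def by (intro sum.neutral ballI) (simp add: mult.assoc)
qed

lemma gram_coeff_swap:
  assumes "\<And>i j. i \<in> I \<Longrightarrow> j \<in> I \<Longrightarrow> w j i = cnj (w i j)"
  shows "gram_coeff I w P l k = cnj (gram_coeff I w P k l)"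
proof -
  have "cnj (gram_coeff I w P k l) = (\<Sum>i\<in>I. \<Sum>j\<in>I. w j i * coeff (P j) l * cnj (coeff (P i) k))"
    unfolding gram_coeff_def cnj_sum by (intro sum.cong refl) (simp add: assms[symmetric] mult.commute)
  also have "\<dots> = gram_coeff I w P l k"
    unfolding gram_coeff_def by (rule sum.swap)
  finally show ?thesis by simp
qed

lemma poly_eq_sum_le_degree:
  fixes p :: "'a::{comm_semiring_0,semiring_1} poly"
  shows "degree p \<le> K \<Longrightarrow> poly p x = (\<Sum>k\<le>K. coeff p k * x ^ k)"
  unfolding poly_altdef by (rule sum.mono_neutral_left) (auto simp: coeff_eq_0)

lemma sum_gram_coeff:
  assumes "\<And>i. i \<in> I \<Longrightarrow> degree (P i) \<le> K"
  shows "(\<Sum>k\<le>K. \<Sum>l\<le>K. gram_coeff I w P k l * x ^ k * cnj (y ^ l)) =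
         (\<Sum>i\<in>I. \<Sum>j\<in>I. w i j * poly (P i) x * cnj (poly (P j) y))"
proof -
  let ?f = "\<lambda>i j k l. w i j * coeff (P i) k * cnj (coeff (P j) l) * x ^ k * cnj (y ^ l)"
  have "(\<Sum>i\<in>I. \<Sum>j\<in>I. w i j * poly (P i) x * cnj (poly (P j) y)) = (\<Sum>i\<in>I. \<Sum>j\<in>I. \<Sum>k\<le>K. \<Sum>l\<le>K. ?f i j k l)"
    by (intro sum.cong refl)
       (simp add: poly_eq_sum_le_degree[OF assms] sum_distrib_left sum_distrib_right mult_ac)
  also have "\<dots> = (\<Sum>i\<in>I. \<Sum>k\<le>K. \<Sum>j\<in>I. \<Sum>l\<le>K. ?f i j k l)"
    by (intro sum.cong refl) (rule sum.swap)
  also have "\<dots> = (\<Sum>k\<le>K. \<Sum>i\<in>I. \<Sum>l\<le>K. \<Sum>j\<in>I. ?f i j k l)"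
    by (subst sum.swap) (intro sum.cong refl, rule sum.swap)
  also have "\<dots> = (\<Sum>k\<le>K. \<Sum>l\<le>K. \<Sum>i\<in>I. \<Sum>j\<in>I. ?f i j k l)"
    by (intro sum.cong refl) (rule sum.swap)
  finally show ?thesis
    by (simp add: gram_coeff_def sum_distrib_right)
qed

definition herm_of_gram :: "'i set \<Rightarrow> ('i \<Rightarrow> 'i \<Rightarrow> complex) \<Rightarrow> ('i \<Rightarrow> complex poly) \<Rightarrow> mindex \<Rightarrow> mindex \<Rightarrow> complex" where
  "herm_of_gram I w P \<alpha> \<beta> =
     (if in_vars 1 \<alpha> \<and> in_vars 1 \<beta> then gram_coeff I w P (\<alpha> 0) (\<beta> 0) else 0)"

lemma herm_of_gram_support:
  assumes "\<And>i. i \<in> I \<Longrightarrow> degree (P i) \<le> K"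
  shows "{(\<alpha>, \<beta>). herm_of_gram I w P \<alpha> \<beta> \<noteq> 0} \<subseteq> (unit_index ` {..K}) \<times> (unit_index ` {..K})"
proof
  fix x assume "x \<in> {(\<alpha>, \<beta>). herm_of_gram I w P \<alpha> \<beta> \<noteq> 0}"
  then obtain \<alpha> \<beta> where x: "x = (\<alpha>, \<beta>)" and nz: "herm_of_gram I w P \<alpha> \<beta> \<noteq> 0"
    by blast
  then have "in_vars 1 \<alpha>" "in_vars 1 \<beta>" "\<not> (K < \<alpha> 0 \<or> K < \<beta> 0)"
    using gram_coeff_eq_0[OF assms, where k = "\<alpha> 0" and l = "\<beta> 0" and w = w]
    by (auto simp: herm_of_gram_def split: if_splits)
  then show "x \<in> (unit_index ` {..K}) \<times> (unit_index ` {..K})"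
    unfolding x by (auto intro!: image_eqI[OF in_vars_one_iff[THEN iffD1]])
qed

context
  fixes I :: "'i set" and w :: "'i \<Rightarrow> 'i \<Rightarrow> complex" and P :: "'i \<Rightarrow> complex poly" and K :: nat
  assumes finite: "finite I" and hermitian: "\<And>i j. w j i = cnj (w i j)"
  defines "K \<equiv> Max (insert 0 (degree ` P ` I))"
begin

lemma degree_le_K: "i \<in> I \<Longrightarrow> degree (P i) \<le> K"
  unfolding K_def using finite by simp

lemma is_herm_herm_of_gram: "is_herm 1 (herm_of_gram I w P)"
proof -
  have "finite {(\<alpha>, \<beta>). herm_of_gram I w P \<alpha> \<beta> \<noteq> 0}"
    using finite_subset[OF herm_of_gram_support[OF degree_le_K]] by simp
  moreover have "herm_of_gram I w P \<alpha> \<beta> = cnj (herm_of_gram I w P \<beta> \<alpha>)" for \<alpha> \<beta>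
    using gram_coeff_swap[OF hermitian, where I = I and P = P and l = "\<alpha> 0" and k = "\<beta> 0"] by (simp add: herm_of_gram_def)
  moreover have "herm_of_gram I w P \<alpha> \<beta> \<noteq> 0 \<Longrightarrow> in_vars 1 \<alpha> \<and> in_vars 1 \<beta>" for \<alpha> \<beta>
    by (simp add: herm_of_gram_def split: if_splits)
  ultimately show ?thesis
    unfolding is_herm_def by blast
qed

lemma herm_eval_herm_of_gram:
  "herm_eval 1 (herm_of_gram I w P) x y = (\<Sum>i\<in>I. \<Sum>j\<in>I. w i j * poly (P i) (x 0) * cnj (poly (P j) (y 0)))"
proof -
  let ?U = "unit_index ` {..K}"
  have inj: "inj_on unit_index {..K}"
    using inj_unit_index by (rule inj_on_subset) simp
  have "herm_eval 1 (herm_of_gram I w P) x y =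
     (\<Sum>\<alpha>\<in>?U. \<Sum>\<beta>\<in>?U. herm_of_gram I w P \<alpha> \<beta> * x 0 ^ \<alpha> 0 * cnj (y 0 ^ \<beta> 0))"
    by (simp add: herm_eval_eq_sum_superset[OF _ herm_of_gram_support[OF degree_le_K]]
        sum.cartesian_product)
  also have "\<dots> = (\<Sum>k\<le>K. \<Sum>l\<le>K. gram_coeff I w P k l * x 0 ^ k * cnj (y 0 ^ l))"
    by (subst sum.reindex[OF inj], simp, subst sum.reindex[OF inj]) (simp add: herm_of_gram_def in_vars_def unit_index_def)
  also have "\<dots> = (\<Sum>i\<in>I. \<Sum>j\<in>I. w i j * poly (P i) (x 0) * cnj (poly (P j) (y 0)))"
    by (rule sum_gram_coeff[OF degree_le_K])
  finally show ?thesis .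
qed

end

subsection \<open>Pullback along a polynomial curve\<close>

definition monom_subst :: "nat \<Rightarrow> mindex \<Rightarrow> (nat \<Rightarrow> 'a::comm_semiring_1 poly) \<Rightarrow> 'a poly" where
  "monom_subst n \<alpha> \<gamma> = (\<Prod>i<n. \<gamma> i ^ \<alpha> i)"

lemma poly_monom_subst: "poly (monom_subst n \<alpha> \<gamma>) t = mono n \<alpha> (\<lambda>i. poly (\<gamma> i) t)"
  by (simp add: monom_subst_def mono_def poly_prod)

definition hpoly_comp :: "nat \<Rightarrow> (mindex \<Rightarrow> complex) \<Rightarrow> (nat \<Rightarrow> complex poly) \<Rightarrow> complex poly" where
  "hpoly_comp n a \<gamma> = (\<Sum>\<alpha>\<in>{\<alpha>. a \<alpha> \<noteq> 0}. [:a \<alpha>:] * monom_subst n \<alpha> \<gamma>)"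

lemma poly_hpoly_comp: "poly (hpoly_comp n a \<gamma>) t = hpoly_eval n a (\<lambda>i. poly (\<gamma> i) t)"
  by (simp add: hpoly_comp_def hpoly_eval_def poly_sum poly_monom_subst)

definition herm_support :: "(mindex \<Rightarrow> mindex \<Rightarrow> complex) \<Rightarrow> mindex set" where
  "herm_support s = fst ` {(\<alpha>, \<beta>). s \<alpha> \<beta> \<noteq> 0} \<union> snd ` {(\<alpha>, \<beta>). s \<alpha> \<beta> \<noteq> 0}"

lemma finite_herm_support: "is_herm n s \<Longrightarrow> finite (herm_support s)"
  unfolding is_herm_def herm_support_def by blast

lemma herm_support_in_vars:
  assumes "is_herm n s" "\<alpha> \<in> herm_support s"
  shows "in_vars n \<alpha>"
proof -
  have "s \<alpha> \<beta> \<noteq> 0 \<Longrightarrow> in_vars n \<alpha> \<and> in_vars n \<beta>" for \<alpha> \<beta>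
    using assms(1) unfolding is_herm_def by blast
  with assms(2) show ?thesis
    unfolding herm_support_def by auto
qed

lemma herm_eval_eq_sum_herm_support:
  assumes "is_herm n s"
  shows "herm_eval n s z w = (\<Sum>\<alpha>\<in>herm_support s. \<Sum>\<beta>\<in>herm_support s. s \<alpha> \<beta> * mono n \<alpha> z * cnj (mono n \<beta> w))"
proof -
  have "{(\<alpha>, \<beta>). s \<alpha> \<beta> \<noteq> 0} \<subseteq> herm_support s \<times> herm_support s"
    unfolding herm_support_def by force
  then show ?thesis
    using finite_herm_support[OF assms] by (simp add: herm_eval_eq_sum_superset sum.cartesian_product)
qed

lemma is_herm_sym: "is_herm n s \<Longrightarrow> s \<beta> \<alpha> = cnj (s \<alpha> \<beta>)"
  unfolding is_herm_def by (metis complex_cnj_cnj)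

lemma herm_eval_herm_of_gram_subst:
  assumes "is_herm n s" "\<And>\<alpha> t. poly (P \<alpha>) t = mono n \<alpha> (\<gamma> t)"
  shows "herm_eval 1 (herm_of_gram (herm_support s) s P) x y = herm_eval n s (\<gamma> (x 0)) (\<gamma> (y 0))"
  unfolding herm_eval_herm_of_gram[OF finite_herm_support[OF assms(1)] is_herm_sym[OF assms(1)]]
    herm_eval_eq_sum_herm_support[OF assms(1)] assms(2) ..

lemma pullback_exists:
  assumes "is_herm n r"
  shows "\<exists>q. is_pullback n r zm q"
proof -
  let ?q = "herm_of_gram (herm_support r) r (\<lambda>\<alpha>. monom_subst n \<alpha> zm)"
  have "is_herm 1 ?q"
    by (rule is_herm_herm_of_gram[OF finite_herm_support[OF assms] is_herm_sym[OF assms]])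
  moreover have "herm_eval 1 ?q (\<lambda>_. t) (\<lambda>_. s) = herm_eval n r (\<lambda>i. poly (zm i) t) (\<lambda>i. poly (zm i) s)" for t s
    by (rule herm_eval_herm_of_gram_subst[OF assms poly_monom_subst])
  ultimately show ?thesis
    unfolding is_pullback_def by blast
qed

lemma pullback_eval:
  "is_pullback n r zm q \<Longrightarrow> herm_eval 1 q x y = herm_eval n r (\<lambda>i. poly (zm i) (x 0)) (\<lambda>i. poly (zm i) (y 0))"
  unfolding is_pullback_def by (subst herm_eval_one_cong) blast

lemma pullback_Pk:
  assumes "is_pullback n r zm q" "Pk k n r"
  shows "Pk k 1 q"
proof -
  have Pr: "let qq = (\<Sum>i<k. \<Sum>j<k. cnj (v i) * herm_eval n r (pts i) (pts j) * v j) in Im qq = 0 \<and> 0 \<le> Re qq"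
    for pts v
    using assms(2) unfolding Pk_def by blast
  have "let qq = (\<Sum>i<k. \<Sum>j<k. cnj (v i) * herm_eval 1 q (pts i) (pts j) * v j) in Im qq = 0 \<and> 0 \<le> Re qq"
    for pts v
    using Pr[where pts = "\<lambda>i j. poly (zm j) (pts i 0)" and v = v] unfolding pullback_eval[OF assms(1)] .
  moreover have "is_herm 1 q"
    using assms(1) by (simp add: is_pullback_def)
  ultimately show ?thesis
    unfolding Pk_def by blast
qed

lemma pullback_Pinf:
  assumes "is_pullback n r zm q" "Pinf n r"
  shows "Pinf 1 q"
proof -
  obtain N h where h: "is_hpoly_map n N h" "\<And>z. herm_eval n r z z = of_real (map_normsq n N h z)"
    using assms(2) unfolding Pinf_def by blast
  let ?H = "\<lambda>j. hpoly_of_poly (hpoly_comp n (h j) zm)"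
  have "herm_eval 1 q z z = of_real (map_normsq 1 N ?H z)" for z
    unfolding pullback_eval[OF assms(1)] h(2) map_normsq_hpoly_of_poly
    by (simp add: map_normsq_def poly_hpoly_comp)
  moreover have "is_herm 1 q"
    using assms(1) by (simp add: is_pullback_def)
  ultimately show ?thesis
    unfolding Pinf_def using is_hpoly_map_hpoly_of_poly[of N "\<lambda>j. hpoly_comp n (h j) zm"] by blast
qed

subsection \<open>A Hermitian polynomial is determined by its diagonal\<close>

lemma poly_eq_0_if_infinite_roots:
  fixes p :: "'a::idom poly"
  assumes "infinite S" "\<And>x. x \<in> S \<Longrightarrow> poly p x = 0"
  shows "p = 0"
  using assms poly_roots_finite[of p] finite_subset[of S "{x. poly p x = 0}"] by blast

lemma infinite_unit_circle: "infinite {w::complex. cmod w = 1}"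
proof
  assume fin: "finite {w::complex. cmod w = 1}"
  have "inj_on (\<lambda>x. Complex x (sqrt (1 - x\<^sup>2))) {-1..1}"
    by (rule inj_onI) (metis complex.sel(1))
  moreover have "(\<lambda>x. Complex x (sqrt (1 - x\<^sup>2))) ` {-1..1} \<subseteq> {w. cmod w = 1}"
    by (auto simp: cmod_def abs_square_le_1 abs_le_iff)
  ultimately have "finite {-1..1::real}"
    using fin by (meson finite_imageD finite_subset)
  then show False
    by (simp add: infinite_Icc)
qed

lemma coeff_eq_0_if_vanishes_on_reals:
  fixes c :: "nat \<Rightarrow> complex"
  assumes "\<And>x::real. (\<Sum>d\<le>M. c d * of_real x ^ d) = 0" "d \<le> M"
  shows "c d = 0"
proof -
  define p where "p = (\<Sum>d\<le>M. monom (c d) d)"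
  have "poly p x = 0" if "x \<in> range of_real" for x
    using that assms(1) by (auto simp: p_def poly_sum poly_monom)
  moreover have "infinite (range (of_real :: real \<Rightarrow> complex))"
    using finite_imageD[OF _ inj_of_real] infinite_UNIV_char_0 by blast
  ultimately have "p = 0"
    using poly_eq_0_if_infinite_roots by blast
  then have "coeff p d = 0"
    by simp
  with assms(2) show ?thesis
    by (simp add: p_def coeff_sum)
qed

lemma sum_sum_regroup_by_degree:
  fixes f :: "nat \<Rightarrow> nat \<Rightarrow> 'a::comm_semiring_1"
  shows "(\<Sum>k\<le>K. \<Sum>l\<le>K. f k l * x ^ (k + l)) =
         (\<Sum>d\<le>2*K. x ^ d * (\<Sum>k\<le>K. \<Sum>l\<le>K. if k + l = d then f k l else 0))"
proof -
  have "(\<Sum>d\<le>2*K. x ^ d * (\<Sum>k\<le>K. \<Sum>l\<le>K. if k + l = d then f k l else 0)) =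
        (\<Sum>d\<le>2*K. \<Sum>k\<le>K. \<Sum>l\<le>K. if k + l = d then f k l * x ^ (k + l) else 0)"
    by (simp add: sum_distrib_left mult_ac if_distrib cong: if_cong)
  also have "\<dots> = (\<Sum>k\<le>K. \<Sum>d\<le>2*K. \<Sum>l\<le>K. if k + l = d then f k l * x ^ (k + l) else 0)"
    by (rule sum.swap)
  also have "\<dots> = (\<Sum>k\<le>K. \<Sum>l\<le>K. \<Sum>d\<le>2*K. if k + l = d then f k l * x ^ (k + l) else 0)"
    by (rule sum.cong[OF refl], rule sum.swap)
  also have "\<dots> = (\<Sum>k\<le>K. \<Sum>l\<le>K. f k l * x ^ (k + l))"
    by (intro sum.cong refl) (simp add: sum.delta)
  finally show ?thesis
    by simp
qed

lemma sum_products_regroup_by_degree: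
  fixes w :: "'i \<Rightarrow> 'i \<Rightarrow> complex" and X Y :: "'i \<Rightarrow> nat \<Rightarrow> complex"
  shows "(\<Sum>a\<in>A. \<Sum>b\<in>A. w a b * (\<Sum>k\<le>K. X a k * e ^ k) * (\<Sum>l\<le>K. Y b l * e ^ l)) =
    (\<Sum>d\<le>2*K. e ^ d * (\<Sum>a\<in>A. \<Sum>b\<in>A. \<Sum>k\<le>K. \<Sum>l\<le>K. if k + l = d then w a b * X a k * Y b l else 0))"
proof -
  have "(\<Sum>a\<in>A. \<Sum>b\<in>A. w a b * (\<Sum>k\<le>K. X a k * e ^ k) * (\<Sum>l\<le>K. Y b l * e ^ l)) =
        (\<Sum>a\<in>A. \<Sum>b\<in>A. \<Sum>k\<le>K. \<Sum>l\<le>K. (w a b * X a k * Y b l) * e ^ (k + l))"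
    by (intro sum.cong refl) (simp add: sum_distrib_left sum_distrib_right power_add mult_ac)
  also have "\<dots> = (\<Sum>a\<in>A. \<Sum>b\<in>A. \<Sum>d\<le>2*K. e ^ d * (\<Sum>k\<le>K. \<Sum>l\<le>K. if k + l = d then w a b * X a k * Y b l else 0))"
    by (rule sum.cong[OF refl], rule sum.cong[OF refl], rule sum_sum_regroup_by_degree)
  also have "\<dots> = (\<Sum>d\<le>2*K. \<Sum>a\<in>A. \<Sum>b\<in>A. e ^ d * (\<Sum>k\<le>K. \<Sum>l\<le>K. if k + l = d then w a b * X a k * Y b l else 0))"
    by (subst sum.swap, rule sum.cong[OF refl], rule sum.swap)
  finally show ?thesis
    by (simp add: sum_distrib_left)
qed

lemma sesqui_poly_homogeneous_part_eq_0:
  fixes Q :: "nat \<Rightarrow> nat \<Rightarrow> complex"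
  assumes zero: "\<And>t. (\<Sum>k\<le>K. \<Sum>l\<le>K. Q k l * t ^ k * cnj (t ^ l)) = 0" and "d \<le> 2 * K"
  shows "(\<Sum>k\<le>K. \<Sum>l\<le>K. if k + l = d then Q k l * w ^ k * cnj w ^ l else 0) = 0"
proof -
  define R where "R e = (\<Sum>k\<le>K. \<Sum>l\<le>K. if k + l = e then Q k l * w ^ k * cnj w ^ l else 0)" for e
  \<comment> \<open>At \<open>t = x w\<close> with real \<open>x\<close> the identity becomes a polynomial in \<open>x\<close> with coefficients \<open>R e\<close>.\<close>
  have "(\<Sum>e\<le>2*K. R e * of_real x ^ e) = 0" for x :: real
  proof -
    have "(\<Sum>e\<le>2*K. R e * of_real x ^ e) = (\<Sum>k\<le>K. \<Sum>l\<le>K. (Q k l * w ^ k * cnj w ^ l) * of_real x ^ (k + l))"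
      unfolding R_def sum_sum_regroup_by_degree by (simp add: mult.commute)
    also have "\<dots> = (\<Sum>k\<le>K. \<Sum>l\<le>K. Q k l * (of_real x * w) ^ k * cnj ((of_real x * w) ^ l))"
      by (intro sum.cong refl) (simp add: power_mult_distrib power_add mult_ac)
    also have "\<dots> = 0"
      by (rule zero)
    finally show ?thesis .
  qed
  then show ?thesis
    using coeff_eq_0_if_vanishes_on_reals[where M = "2*K" and c = R and d = d] assms(2) by (simp add: R_def)
qed

lemma sesqui_poly_coeff_eq_0:
  fixes Q :: "nat \<Rightarrow> nat \<Rightarrow> complex"
  assumes zero: "\<And>t. (\<Sum>k\<le>K. \<Sum>l\<le>K. Q k l * t ^ k * cnj (t ^ l)) = 0" and "k0 \<le> K" "l0 \<le> K"
  shows "Q k0 l0 = 0"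
proof -
  define d where "d = k0 + l0"
  define R where "R w = (\<Sum>k\<le>K. \<Sum>l\<le>K. if k + l = d then Q k l * w ^ k * cnj w ^ l else 0)" for w
  have homogeneous: "R w = 0" for w
    unfolding R_def using assms d_def by (intro sesqui_poly_homogeneous_part_eq_0) auto
  \<comment> \<open>On the unit circle \<open>cnj w = 1 / w\<close>, so \<open>w\<^sup>d R w\<close> is the polynomial \<open>p\<close> in \<open>w\<close>.\<close>
  define p where "p = (\<Sum>k\<le>K. \<Sum>l\<le>K. monom (if k + l = d then Q k l else 0) (2 * k))"
  have "poly p w = 0" if "cmod w = 1" for w
  proof -
    have unit: "w * cnj w = 1"
      using that by (simp add: complex_norm_square[symmetric])
    have key: "w ^ d * (Q k l * w ^ k * cnj w ^ l) = Q k l * w ^ (2 * k)" if "k + l = d" for k l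
    proof -
      have "w ^ d * (Q k l * w ^ k * cnj w ^ l) = Q k l * w ^ (2 * k) * (w * cnj w) ^ l"
        by (simp add: that[symmetric] power_add power_mult_distrib power_mult mult_ac power2_eq_square)
      then show ?thesis
        by (simp add: unit)
    qed
    have "poly p w = w ^ d * R w"
      unfolding p_def R_def sum_distrib_left poly_sum poly_monom
      by (intro sum.cong refl) (auto simp: key)
    then show ?thesis
      by (simp add: homogeneous)
  qed
  then have "p = 0"
    using poly_eq_0_if_infinite_roots[OF infinite_unit_circle] by blast
  then have "coeff p (2 * k0) = 0"
    by simp
  moreover have "coeff p (2 * k0) = Q k0 l0"
  proof -
    have "coeff (monom (if k + l = d then Q k l else 0) (2 * k)) (2 * k0) =
        (if k = k0 then if l = l0 then Q k l else 0 else 0)" for k l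
      by (auto simp: coeff_monom d_def)
    moreover have "(\<Sum>l\<le>K. if k = k0 then f l else 0) = (if k = k0 then \<Sum>l\<le>K. f l else 0)" for k and f :: "nat \<Rightarrow> complex"
      by simp
    ultimately show ?thesis
      unfolding p_def coeff_sum using assms(2,3) by simp
  qed
  ultimately show ?thesis
    by simp
qed

lemma sum_digits_less:
  fixes N :: nat
  assumes "\<And>i. i < n \<Longrightarrow> a i < N"
  shows "(\<Sum>i<n. a i * N ^ i) < N ^ n"
  using assms
proof (induction n)
  case 0 then show ?case by simp
next
  case (Suc n)
  have "(\<Sum>i<Suc n. a i * N ^ i) = (\<Sum>i<n. a i * N ^ i) + a n * N ^ n" by simp
  also have "\<dots> < N ^ n + a n * N ^ n" using Suc by simp
  also have "\<dots> = (Suc (a n)) * N ^ n" by simp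
  also have "\<dots> \<le> N * N ^ n" using Suc.prems[of n] by (intro mult_right_mono) auto
  finally show ?case by simp
qed

lemma sum_digits_inj:
  fixes N :: nat
  assumes "\<And>i. i < n \<Longrightarrow> a i < N" "\<And>i. i < n \<Longrightarrow> b i < N"
    and "(\<Sum>i<n. a i * N ^ i) = (\<Sum>i<n. b i * N ^ i)"
  shows "\<forall>i<n. a i = b i"
  using assms
proof (induction n)
  case 0 then show ?case by simp
next
  case (Suc n)
  define u where "u = (\<Sum>i<n. a i * N ^ i)"
  define v where "v = (\<Sum>i<n. b i * N ^ i)"
  have u: "u < N ^ n" unfolding u_def using Suc.prems(1) by (intro sum_digits_less) auto
  have v: "v < N ^ n" unfolding v_def using Suc.prems(2) by (intro sum_digits_less) auto
  have eq: "u + a n * N ^ n = v + b n * N ^ n" using Suc.prems(3) unfolding u_def v_def by simp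
  have Npos: "N > 0" using Suc.prems(1)[of n] by simp
  have "(u + a n * N ^ n) mod N ^ n = u" using u by simp
  moreover have "(v + b n * N ^ n) mod N ^ n = v" using v by simp
  ultimately have uv: "u = v" using eq by simp
  then have an: "a n = b n" using eq Npos by simp
  have "\<forall>i<n. a i = b i" using Suc.IH Suc.prems uv unfolding u_def v_def by auto
  then show ?case using an less_Suc_eq by auto
qed

lemma inj_on_kronecker:
  "inj_on (\<lambda>\<alpha>. \<Sum>i<n. \<alpha> i * N ^ i) {\<alpha>. in_vars n \<alpha> \<and> (\<forall>i<n. \<alpha> i < N)}"
proof (rule inj_onI, rule ext)
  fix \<alpha> \<beta> i
  assume \<alpha>: "\<alpha> \<in> {\<alpha>. in_vars n \<alpha> \<and> (\<forall>i<n. \<alpha> i < N)}" and \<beta>: "\<beta> \<in> {\<alpha>. in_vars n \<alpha> \<and> (\<forall>i<n. \<alpha> i < N)}"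
    and eq: "(\<Sum>i<n. \<alpha> i * N ^ i) = (\<Sum>i<n. \<beta> i * N ^ i)"
  show "\<alpha> i = \<beta> i"
  proof (cases "i < n")
    case True
    have "\<forall>i<n. \<alpha> i = \<beta> i"
      by (rule sum_digits_inj[OF _ _ eq]) (use \<alpha> \<beta> in blast)+
    with True show ?thesis
      by blast
  next
    case False
    with \<alpha> \<beta> show ?thesis
      by (simp add: in_vars_def)
  qed
qed

lemma exists_inj_on_kronecker:
  assumes "finite A" "\<And>\<alpha>. \<alpha> \<in> A \<Longrightarrow> in_vars n \<alpha>"
  shows "\<exists>N. inj_on (\<lambda>\<alpha>. \<Sum>i<n. \<alpha> i * N ^ i) A"
proof
  define N where "N = Suc (Max (\<Union>\<alpha>\<in>A. \<alpha> ` {..<n}))"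
  have "\<alpha> i < N" if "\<alpha> \<in> A" "i < n" for \<alpha> i
    unfolding N_def using assms(1) that by (intro le_imp_less_Suc Max_ge) auto
  then have "A \<subseteq> {\<alpha>. in_vars n \<alpha> \<and> (\<forall>i<n. \<alpha> i < N)}"
    using assms(2) by blast
  then show "inj_on (\<lambda>\<alpha>. \<Sum>i<n. \<alpha> i * N ^ i) A"
    by (rule inj_on_subset[OF inj_on_kronecker])
qed

lemma mono_kronecker: "mono n \<alpha> (\<lambda>i. t ^ N ^ i) = t ^ (\<Sum>i<n. \<alpha> i * N ^ i)"
  unfolding mono_def power_sum by (simp add: power_mult mult.commute[of "\<alpha> _"])

lemma gram_coeff_monom:
  assumes "finite A" "inj_on e A" "\<alpha> \<in> A" "\<beta> \<in> A"
  shows "gram_coeff A w (\<lambda>a. monom 1 (e a)) (e \<alpha>) (e \<beta>) = w \<alpha> \<beta>"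
proof -
  have "gram_coeff A w (\<lambda>a. monom 1 (e a)) (e \<alpha>) (e \<beta>) =
      (\<Sum>a\<in>A. \<Sum>b\<in>A. if a = \<alpha> then if b = \<beta> then w a b else 0 else 0)"
    unfolding gram_coeff_def using assms(2-4)
    by (intro sum.cong refl) (auto simp: coeff_monom dest: inj_onD)
  also have "\<dots> = w \<alpha> \<beta>"
  proof -
    have "(\<Sum>b\<in>A. if a = \<alpha> then f b else 0) = (if a = \<alpha> then \<Sum>b\<in>A. f b else 0)" for a and f :: "'a \<Rightarrow> complex"
      by simp
    then show ?thesis
      using assms(1,3,4) by simp
  qed
  finally show ?thesis .
qed

lemma herm_diag_nonzero:
  assumes herm: "is_herm n s" and "s \<alpha>0 \<beta>0 \<noteq> 0"
  shows "\<exists>p. herm_eval n s p p \<noteq> 0"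
proof (rule ccontr)
  assume "\<not> (\<exists>p. herm_eval n s p p \<noteq> 0)"
  then have zero: "herm_eval n s p p = 0" for p
    by blast
  define A where "A = herm_support s"
  have finA: "finite A"
    unfolding A_def using finite_herm_support[OF herm] .
  have mem: "\<alpha>0 \<in> A" "\<beta>0 \<in> A"
    using assms(2) unfolding A_def herm_support_def by force+
  \<comment> \<open>Kronecker substitution \<open>z\<^sub>i = t\<^bsup>N\<^sup>i\<^esup>\<close>: distinct exponents in the support become distinct powers of \<open>t\<close>.\<close>
  obtain N where inj: "inj_on (\<lambda>\<alpha>. \<Sum>i<n. \<alpha> i * N ^ i) A"
    using exists_inj_on_kronecker[OF finA] herm_support_in_vars[OF herm] unfolding A_def by blast
  define e where "e \<alpha> = (\<Sum>i<n. \<alpha> i * N ^ i)" for \<alpha>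
  define P where "P \<alpha> = monom (1::complex) (e \<alpha>)" for \<alpha>
  define K where "K = Max (e ` A)"
  have deg: "degree (P \<alpha>) \<le> K" if "\<alpha> \<in> A" for \<alpha>
    unfolding P_def K_def using finA that by (simp add: degree_monom_eq)
  have "(\<Sum>k\<le>K. \<Sum>l\<le>K. gram_coeff A s P k l * t ^ k * cnj (t ^ l)) =
      (\<Sum>\<alpha>\<in>A. \<Sum>\<beta>\<in>A. s \<alpha> \<beta> * poly (P \<alpha>) t * cnj (poly (P \<beta>) t))" for t
    by (rule sum_gram_coeff[OF deg])
  also have "\<dots> t = herm_eval n s (\<lambda>i. t ^ N ^ i) (\<lambda>i. t ^ N ^ i)" for t
    unfolding herm_eval_eq_sum_herm_support[OF herm] A_def[symmetric] mono_kronecker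
    by (simp add: P_def e_def poly_monom)
  finally have "(\<Sum>k\<le>K. \<Sum>l\<le>K. gram_coeff A s P k l * t ^ k * cnj (t ^ l)) = 0" for t
    by (simp add: zero)
  moreover have "e \<alpha>0 \<le> K" "e \<beta>0 \<le> K"
    unfolding K_def using finA mem by auto
  ultimately have "gram_coeff A s P (e \<alpha>0) (e \<beta>0) = 0"
    by (rule sesqui_poly_coeff_eq_0)
  moreover have "gram_coeff A s P (e \<alpha>0) (e \<beta>0) = s \<alpha>0 \<beta>0"
    unfolding P_def by (rule gram_coeff_monom[OF finA inj[folded e_def] mem])
  ultimately show False
    using assms(2) by simp
qed

subsection \<open>Expansions in a real parameter\<close>

lemma poly_eq_power_mult_poly_shift:
  fixes p :: "'a::comm_ring_1 poly"
  assumes "\<And>k. k < m \<Longrightarrow> coeff p k = 0"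
  shows "poly p x = x ^ m * poly (poly_shift m p) x"
proof -
  have "p = monom 1 m * poly_shift m p"
    by (rule poly_eqI) (auto simp: coeff_monom_mult coeff_poly_shift assms)
  then show ?thesis
    by (metis poly_monom poly_mult mult_1)
qed

lemma tendsto_poly_div_power:
  fixes p :: "complex poly"
  assumes "\<And>k. k < m \<Longrightarrow> coeff p k = 0"
  shows "((\<lambda>\<epsilon>::real. poly p (of_real \<epsilon>) / of_real \<epsilon> ^ m) \<longlongrightarrow> coeff p m) (at 0)"
proof -
  have "((\<lambda>\<epsilon>::real. poly (poly_shift m p) (of_real \<epsilon>)) \<longlongrightarrow> poly (poly_shift m p) (of_real 0)) (at 0)"
    by (intro tendsto_intros)
  then have "((\<lambda>\<epsilon>::real. poly (poly_shift m p) (of_real \<epsilon>)) \<longlongrightarrow> coeff p m) (at 0)"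
    by (simp add: poly_0_coeff_0 coeff_poly_shift)
  moreover have "\<forall>\<^sub>F \<epsilon> in at (0::real). poly (poly_shift m p) (of_real \<epsilon>) = poly p (of_real \<epsilon>) / of_real \<epsilon> ^ m"
    unfolding eventually_at_filter by (auto simp: poly_eq_power_mult_poly_shift[OF assms])
  ultimately show ?thesis
    by (rule Lim_transform_eventually)
qed

lemma tendsto_normsq_div_power:
  fixes f :: "nat \<Rightarrow> complex poly"
  assumes "\<And>j k. j < N \<Longrightarrow> k < m \<Longrightarrow> coeff (f j) k = 0"
  shows "((\<lambda>\<epsilon>::real. (\<Sum>j<N. (cmod (poly (f j) (of_real \<epsilon>)))\<^sup>2) / \<epsilon> ^ (2 * m))
          \<longlongrightarrow> (\<Sum>j<N. (cmod (coeff (f j) m))\<^sup>2)) (at 0)"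
proof -
  have "((\<lambda>\<epsilon>::real. \<Sum>j<N. (cmod (poly (f j) (of_real \<epsilon>) / of_real \<epsilon> ^ m))\<^sup>2)
      \<longlongrightarrow> (\<Sum>j<N. (cmod (coeff (f j) m))\<^sup>2)) (at 0)"
    using assms by (intro tendsto_intros tendsto_poly_div_power) auto
  moreover have "(cmod (z / of_real \<epsilon> ^ m))\<^sup>2 = (cmod z)\<^sup>2 / \<epsilon> ^ (2 * m)" for z and \<epsilon> :: real
  proof -
    have "(\<bar>\<epsilon>\<bar> ^ m)\<^sup>2 = \<epsilon> ^ (2 * m)"
      by (simp add: power_even_abs mult.commute flip: power_mult)
    then show ?thesis
      by (simp add: norm_divide norm_power power_divide)
  qed
  ultimately show ?thesis
    by (simp add: sum_divide_distrib)
qed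

lemma coeff_eq_0_below_order:
  fixes p :: "complex poly" and R :: "real \<Rightarrow> real"
  assumes R: "(R \<longlongrightarrow> L) (at 0)"
    and bound: "\<And>\<epsilon>. \<epsilon> \<noteq> 0 \<Longrightarrow> (cmod (poly p (of_real \<epsilon>)))\<^sup>2 \<le> \<epsilon> ^ (2 * m) * R \<epsilon>"
    and "k < m"
  shows "coeff p k = 0"
proof (rule ccontr)
  assume "coeff p k \<noteq> 0"
  define k0 where "k0 = (LEAST k. coeff p k \<noteq> 0)"
  have k0: "coeff p k0 \<noteq> 0" "k0 < m"
    using LeastI[of "\<lambda>k. coeff p k \<noteq> 0", OF \<open>coeff p k \<noteq> 0\<close>]
      Least_le[of "\<lambda>k. coeff p k \<noteq> 0", OF \<open>coeff p k \<noteq> 0\<close>] \<open>k < m\<close>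
    unfolding k0_def by auto
  have below: "coeff p i = 0" if "i < k0" for i
    using that not_less_Least unfolding k0_def by blast
  define g where "g \<epsilon> = (cmod (poly (poly_shift k0 p) (of_real \<epsilon>)))\<^sup>2" for \<epsilon> :: real
  have "(g \<longlongrightarrow> (cmod (poly (poly_shift k0 p) (of_real 0)))\<^sup>2) (at 0)"
    unfolding g_def by (intro tendsto_intros)
  then have g_lim: "(g \<longlongrightarrow> (cmod (coeff p k0))\<^sup>2) (at 0)"
    by (simp add: poly_0_coeff_0 coeff_poly_shift)
  have "((\<lambda>\<epsilon>. \<epsilon> ^ (2 * (m - k0)) * R \<epsilon>) \<longlongrightarrow> 0 ^ (2 * (m - k0)) * L) (at 0)"
    by (intro tendsto_intros R)
  moreover have "(0::real) ^ (2 * (m - k0)) * L = 0"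
    using k0(2) by simp
  ultimately have upper_lim: "((\<lambda>\<epsilon>. \<epsilon> ^ (2 * (m - k0)) * R \<epsilon>) \<longlongrightarrow> 0) (at 0)"
    by simp
  have "g \<epsilon> \<le> \<epsilon> ^ (2 * (m - k0)) * R \<epsilon>" if "\<epsilon> \<noteq> 0" for \<epsilon> :: real
  proof -
    have "\<epsilon> ^ (2 * k0) * g \<epsilon> = (cmod (poly p (of_real \<epsilon>)))\<^sup>2"
      by (simp add: g_def poly_eq_power_mult_poly_shift[OF below, of k0] norm_mult norm_power
          power_mult_distrib power_even_abs mult.commute flip: power_mult)
    also have "\<dots> \<le> \<epsilon> ^ (2 * k0) * (\<epsilon> ^ (2 * (m - k0)) * R \<epsilon>)"
    proof -
      have "2 * k0 + 2 * (m - k0) = 2 * m"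
        using k0(2) by simp
      then show ?thesis
        using bound[OF that] by (metis mult.assoc power_add)
    qed
    finally show ?thesis
      using that by (simp add: power_mult)
  qed
  then have "\<forall>\<^sub>F \<epsilon> in at 0. g \<epsilon> \<le> \<epsilon> ^ (2 * (m - k0)) * R \<epsilon>"
    by (auto simp: eventually_at_filter)
  moreover have "\<forall>\<^sub>F \<epsilon> in at 0. 0 \<le> g \<epsilon>"
    by (simp add: g_def)
  ultimately have "(g \<longlongrightarrow> 0) (at 0)"
    using tendsto_sandwich[OF _ _ tendsto_const upper_lim] by blast
  with g_lim k0(1) show False
    using tendsto_unique[OF at_neq_bot] by fastforce
qed

lemma normsq_coeff_eq_limit_product:
  fixes A B :: "real \<Rightarrow> complex" and f :: "nat \<Rightarrow> complex poly"
  assumes A: "(A \<longlongrightarrow> a) (at 0)"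
    and B: "((\<lambda>\<epsilon>. B \<epsilon> / of_real \<epsilon> ^ (2 * m)) \<longlongrightarrow> b) (at 0)"
    and eq: "\<And>\<epsilon>. A \<epsilon> * B \<epsilon> = of_real (\<Sum>j<N. (cmod (poly (f j) (of_real \<epsilon>)))\<^sup>2)"
  shows "of_real (\<Sum>j<N. (cmod (coeff (f j) m))\<^sup>2) = a * b"
proof -
  define R where "R \<epsilon> = (\<Sum>j<N. (cmod (poly (f j) (of_real \<epsilon>)))\<^sup>2) / \<epsilon> ^ (2 * m)" for \<epsilon> :: real
  have "((\<lambda>\<epsilon>. A \<epsilon> * (B \<epsilon> / of_real \<epsilon> ^ (2 * m))) \<longlongrightarrow> a * b) (at 0)"
    by (intro tendsto_mult A B)
  moreover have "A \<epsilon> * (B \<epsilon> / of_real \<epsilon> ^ (2 * m)) = of_real (R \<epsilon>)" for \<epsilon>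
    by (simp only: R_def of_real_divide of_real_power eq[symmetric] times_divide_eq_right)
  ultimately have R_lim: "((\<lambda>\<epsilon>. complex_of_real (R \<epsilon>)) \<longlongrightarrow> a * b) (at 0)"
    by simp
  then have "(R \<longlongrightarrow> Re (a * b)) (at 0)"
    using tendsto_Re by fastforce
  moreover have "(cmod (poly (f j) (of_real \<epsilon>)))\<^sup>2 \<le> \<epsilon> ^ (2 * m) * R \<epsilon>" if "j < N" "\<epsilon> \<noteq> 0" for j \<epsilon>
    using that member_le_sum[of j "{..<N}" "\<lambda>j. (cmod (poly (f j) (of_real \<epsilon>)))\<^sup>2"] by (simp add: R_def)
  ultimately have "coeff (f j) k = 0" if "j < N" "k < m" for j k
    using that by (intro coeff_eq_0_below_order) auto
  then have "(R \<longlongrightarrow> (\<Sum>j<N. (cmod (coeff (f j) m))\<^sup>2)) (at 0)"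
    unfolding R_def by (rule tendsto_normsq_div_power)
  then have "((\<lambda>\<epsilon>. complex_of_real (R \<epsilon>)) \<longlongrightarrow> of_real (\<Sum>j<N. (cmod (coeff (f j) m))\<^sup>2)) (at 0)"
    by (rule tendsto_of_real)
  with R_lim show ?thesis
    using tendsto_unique[OF at_neq_bot] by blast
qed

subsection \<open>Moving the curve\<close>

text \<open>
  A polynomial in \<open>(t, \<epsilon>)\<close> is encoded as a \<open>complex poly poly\<close> with outer variable \<open>\<epsilon>\<close>;
  \<open>pert_poly n a zm c\<close> is \<open>a(z(t) + \<epsilon> c)\<close> in this form.
\<close>

definition pert :: "(nat \<Rightarrow> complex poly) \<Rightarrow> (nat \<Rightarrow> complex) \<Rightarrow> complex \<Rightarrow> complex \<Rightarrow> nat \<Rightarrow> complex" where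
  "pert zm c t e = (\<lambda>i. poly (zm i) t + e * c i)"

definition pert_poly :: "nat \<Rightarrow> (mindex \<Rightarrow> complex) \<Rightarrow> (nat \<Rightarrow> complex poly) \<Rightarrow> (nat \<Rightarrow> complex) \<Rightarrow> complex poly poly" where
  "pert_poly n a zm c = (\<Sum>\<alpha>\<in>{\<alpha>. a \<alpha> \<noteq> 0}. [:[:a \<alpha>:]:] * monom_subst n \<alpha> (\<lambda>i. [:zm i, [:c i:]:]))"

lemma poly_map_poly_eval: "poly (map_poly (\<lambda>q. poly q t) P) e = poly (poly P [:e:]) t"
  by (induction P rule: pCons_induct) (simp_all add: map_poly_pCons)

lemma coeff_map_poly_eval: "coeff (map_poly (\<lambda>q. poly q t) P) k = poly (coeff P k) t"
  by (simp add: coeff_map_poly)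

lemma mono_pert: "mono n \<alpha> (pert zm c t e) = poly (map_poly (\<lambda>q. poly q t) (monom_subst n \<alpha> (\<lambda>i. [:zm i, [:c i:]:]))) e"
  by (simp add: poly_map_poly_eval monom_subst_def mono_def poly_prod pert_def algebra_simps)

lemma poly_pert_poly: "poly (map_poly (\<lambda>q. poly q t) (pert_poly n a zm c)) e = hpoly_eval n a (pert zm c t e)"
  by (simp add: pert_poly_def hpoly_eval_def mono_pert poly_map_poly_eval poly_sum)

lemma tendsto_herm_eval_pert:
  "((\<lambda>\<epsilon>::real. herm_eval n r (pert zm c t (of_real \<epsilon>)) (pert zm c t (of_real \<epsilon>)))
      \<longlongrightarrow> herm_eval n r (\<lambda>i. poly (zm i) t) (\<lambda>i. poly (zm i) t)) (at 0)"
proof -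
  have "isCont (\<lambda>\<epsilon>::real. herm_eval n r (pert zm c t (of_real \<epsilon>)) (pert zm c t (of_real \<epsilon>))) 0"
    unfolding herm_eval_def mono_def pert_def split_def by (intro continuous_intros)
  then show ?thesis
    using isContD by (fastforce simp: pert_def)
qed

lemma mono_pert_eq_sum:
  assumes "degree (monom_subst n \<alpha> (\<lambda>i. [:zm i, [:c i:]:])) \<le> K"
  shows "mono n \<alpha> (pert zm c t e) = (\<Sum>k\<le>K. poly (coeff (monom_subst n \<alpha> (\<lambda>i. [:zm i, [:c i:]:])) k) t * e ^ k)"
proof -
  have "degree (map_poly (\<lambda>q. poly q t) (monom_subst n \<alpha> (\<lambda>i. [:zm i, [:c i:]:]))) \<le> K"
    using map_poly_degree_leq assms order_trans by blast
  then show ?thesis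
    by (simp add: mono_pert poly_eq_sum_le_degree coeff_map_poly_eval)
qed

text \<open>Since \<open>\<epsilon>\<close> is real, \<open>cnj (\<epsilon>\<^sup>l) = \<epsilon>\<^sup>l\<close>; this is why the diagonal of \<open>s\<close> along the moved curve is a
  polynomial in \<open>\<epsilon>\<close>.\<close>

lemma herm_eval_pert_expansion:
  assumes herm: "is_herm n s"
  obtains S :: "nat \<Rightarrow> mindex \<Rightarrow> mindex \<Rightarrow> complex" and K
  where "\<And>d. is_herm 1 (S d)"
    and "\<And>t \<epsilon>. herm_eval n s (pert zm c t (of_real \<epsilon>)) (pert zm c t (of_real \<epsilon>)) =
                (\<Sum>d\<le>K. herm_eval 1 (S d) (\<lambda>_. t) (\<lambda>_. t) * of_real \<epsilon> ^ d)"
proof -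
  define A where "A = herm_support s"
  define M where "M \<alpha> = monom_subst n \<alpha> (\<lambda>i. [:zm i, [:c i:]:])" for \<alpha>
  define K where "K = Max (degree ` M ` A)"
  define P where "P i = coeff (M (fst i)) (snd i)" for i :: "mindex \<times> nat"
  define w where "w d i j = (if snd i + snd j = d then s (fst i) (fst j) else 0)" for d and i j :: "mindex \<times> nat"
  define S where "S d = herm_of_gram (A \<times> {..K}) (w d) P" for d
  have finA: "finite A"
    unfolding A_def using finite_herm_support[OF herm] .
  then have finI: "finite (A \<times> {..K})"
    by simp
  have w_sym: "w d j i = cnj (w d i j)" for d i j
    unfolding w_def using is_herm_sym[OF herm, of "fst j" "fst i"] by (simp add: add.commute)
  have "is_herm 1 (S d)" for d
    unfolding S_def by (rule is_herm_herm_of_gram[OF finI w_sym])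
  moreover have "herm_eval n s (pert zm c t (of_real \<epsilon>)) (pert zm c t (of_real \<epsilon>)) =
      (\<Sum>d\<le>2*K. herm_eval 1 (S d) (\<lambda>_. t) (\<lambda>_. t) * of_real \<epsilon> ^ d)" for t \<epsilon>
  proof -
    have mono_eq: "mono n \<alpha> (pert zm c t (of_real \<epsilon>)) = (\<Sum>k\<le>K. poly (P (\<alpha>, k)) t * of_real \<epsilon> ^ k)"
      if "\<alpha> \<in> A" for \<alpha>
    proof -
      have "degree (M \<alpha>) \<le> K"
        unfolding K_def using finA that by simp
      then show ?thesis
        unfolding P_def M_def fst_conv snd_conv by (rule mono_pert_eq_sum)
    qed
    have "herm_eval n s (pert zm c t (of_real \<epsilon>)) (pert zm c t (of_real \<epsilon>)) =
      (\<Sum>\<alpha>\<in>A. \<Sum>\<beta>\<in>A. s \<alpha> \<beta> * (\<Sum>k\<le>K. poly (P (\<alpha>, k)) t * of_real \<epsilon> ^ k) *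
                       (\<Sum>l\<le>K. cnj (poly (P (\<beta>, l)) t) * of_real \<epsilon> ^ l))"
      unfolding herm_eval_eq_sum_herm_support[OF herm] A_def[symmetric]
      by (intro sum.cong refl) (simp add: mono_eq cnj_sum)
    also have "\<dots> = (\<Sum>d\<le>2*K. of_real \<epsilon> ^ d * (\<Sum>\<alpha>\<in>A. \<Sum>\<beta>\<in>A. \<Sum>k\<le>K. \<Sum>l\<le>K.
        if k + l = d then s \<alpha> \<beta> * poly (P (\<alpha>, k)) t * cnj (poly (P (\<beta>, l)) t) else 0))"
      by (rule sum_products_regroup_by_degree)
    also have "\<dots> = (\<Sum>d\<le>2*K. herm_eval 1 (S d) (\<lambda>_. t) (\<lambda>_. t) * of_real \<epsilon> ^ d)"
    proof (rule sum.cong[OF refl])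
      fix d
      have "herm_eval 1 (S d) (\<lambda>_. t) (\<lambda>_. t) = (\<Sum>\<alpha>\<in>A. \<Sum>k\<le>K. \<Sum>\<beta>\<in>A. \<Sum>l\<le>K.
          w d (\<alpha>, k) (\<beta>, l) * poly (P (\<alpha>, k)) t * cnj (poly (P (\<beta>, l)) t))"
        unfolding S_def herm_eval_herm_of_gram[OF finI w_sym] by (simp only: sum.cartesian_product')
      also have "\<dots> = (\<Sum>\<alpha>\<in>A. \<Sum>\<beta>\<in>A. \<Sum>k\<le>K. \<Sum>l\<le>K.
          w d (\<alpha>, k) (\<beta>, l) * poly (P (\<alpha>, k)) t * cnj (poly (P (\<beta>, l)) t))"
        by (rule sum.cong[OF refl], rule sum.swap)
      also have "\<dots> = (\<Sum>\<alpha>\<in>A. \<Sum>\<beta>\<in>A. \<Sum>k\<le>K. \<Sum>l\<le>K.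
          if k + l = d then s \<alpha> \<beta> * poly (P (\<alpha>, k)) t * cnj (poly (P (\<beta>, l)) t) else 0)"
        by (intro sum.cong refl) (simp add: w_def)
      finally show "of_real \<epsilon> ^ d * (\<Sum>\<alpha>\<in>A. \<Sum>\<beta>\<in>A. \<Sum>k\<le>K. \<Sum>l\<le>K.
          if k + l = d then s \<alpha> \<beta> * poly (P (\<alpha>, k)) t * cnj (poly (P (\<beta>, l)) t) else 0) =
          herm_eval 1 (S d) (\<lambda>_. t) (\<lambda>_. t) * of_real \<epsilon> ^ d"
        by simp
    qed
    finally show ?thesis .
  qed
  ultimately show ?thesis
    by (rule that)
qed

lemma nonneg_real_limit:
  fixes g :: "'a \<Rightarrow> complex"
  assumes "(g \<longlongrightarrow> L) F" "F \<noteq> bot" "\<forall>\<^sub>F x in F. Im (g x) = 0 \<and> 0 \<le> Re (g x)"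
  shows "Im L = 0 \<and> 0 \<le> Re L"
proof -
  have Re: "((\<lambda>x. Re (g x)) \<longlongrightarrow> Re L) F" and Im: "((\<lambda>x. Im (g x)) \<longlongrightarrow> Im L) F"
    using assms(1) by (auto intro: tendsto_Re tendsto_Im)
  have "\<forall>\<^sub>F x in F. 0 \<le> Re (g x)" "\<forall>\<^sub>F x in F. 0 \<le> Im (g x)" "\<forall>\<^sub>F x in F. Im (g x) \<le> 0"
    using assms(3) by (auto elim: eventually_mono)
  then have "0 \<le> Re L" "0 \<le> Im L" "Im L \<le> 0"
    using tendsto_lowerbound[OF Re _ assms(2)] tendsto_lowerbound[OF Im _ assms(2)]
      tendsto_upperbound[OF Im _ assms(2)] by auto
  then show ?thesis
    by simp
qed

lemma tendsto_sum_powers_div_lowest: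
  fixes c :: "nat \<Rightarrow> complex"
  assumes "\<And>d. d < D \<Longrightarrow> c d = 0" "D \<le> K"
  shows "((\<lambda>\<epsilon>::real. (\<Sum>d\<le>K. c d * of_real \<epsilon> ^ d) / of_real \<epsilon> ^ D) \<longlongrightarrow> c D) (at 0)"
proof -
  have coeff: "coeff (\<Sum>d\<le>K. monom (c d) d) k = (if k \<le> K then c k else 0)" for k
    by (simp add: coeff_sum)
  have "((\<lambda>\<epsilon>::real. poly (\<Sum>d\<le>K. monom (c d) d) (of_real \<epsilon>) / of_real \<epsilon> ^ D)
      \<longlongrightarrow> coeff (\<Sum>d\<le>K. monom (c d) d) D) (at 0)"
    by (rule tendsto_poly_div_power) (simp add: coeff assms(1))
  then show ?thesis
    using assms(2) by (simp add: coeff poly_sum poly_monom mult.commute)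
qed

lemma limit_div_power_of_nonneg:
  fixes f :: "real \<Rightarrow> complex"
  assumes lim: "((\<lambda>\<epsilon>. f \<epsilon> / of_real \<epsilon> ^ D) \<longlongrightarrow> L) (at 0)"
    and nonneg: "\<And>\<epsilon>. Im (f \<epsilon>) = 0 \<and> 0 \<le> Re (f \<epsilon>)"
  shows "Im L = 0 \<and> 0 \<le> Re L" and "L \<noteq> 0 \<Longrightarrow> even D"
proof -
  have real: "f \<epsilon> / of_real \<epsilon> ^ D = of_real (Re (f \<epsilon>) / \<epsilon> ^ D)" for \<epsilon>
    using nonneg[of \<epsilon>] by (simp add: complex_eq_iff)
  show L_nonneg: "Im L = 0 \<and> 0 \<le> Re L"
  proof (rule nonneg_real_limit)
    show "((\<lambda>\<epsilon>. f \<epsilon> / of_real \<epsilon> ^ D) \<longlongrightarrow> L) (at_right 0)"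
      using lim filterlim_at_split by blast
    show "\<forall>\<^sub>F \<epsilon> in at_right 0. Im (f \<epsilon> / of_real \<epsilon> ^ D) = 0 \<and> 0 \<le> Re (f \<epsilon> / of_real \<epsilon> ^ D)"
      using eventually_at_right_less[of "0::real"]
      by eventually_elim (use nonneg in \<open>simp add: real\<close>)
  qed simp
  show "even D" if "L \<noteq> 0"
  proof (rule ccontr)
    assume "odd D"
    have "Im (- L) = 0 \<and> 0 \<le> Re (- L)"
    proof (rule nonneg_real_limit)
      show "((\<lambda>\<epsilon>. - (f \<epsilon> / of_real \<epsilon> ^ D)) \<longlongrightarrow> - L) (at_left 0)"
        using lim unfolding filterlim_at_split by (intro tendsto_minus) simp
      have "\<forall>\<^sub>F \<epsilon> in at_left (0::real). \<epsilon> < 0"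
        by (simp add: eventually_at_filter)
      then show "\<forall>\<^sub>F \<epsilon> in at_left 0. Im (- (f \<epsilon> / of_real \<epsilon> ^ D)) = 0 \<and> 0 \<le> Re (- (f \<epsilon> / of_real \<epsilon> ^ D))"
      proof (rule eventually_mono)
        fix \<epsilon> :: real
        assume "\<epsilon> < 0"
        then have "\<epsilon> ^ D < 0"
          using \<open>odd D\<close> by (simp add: odd_pos power_less_zero_eq)
        then have "Re (f \<epsilon>) / \<epsilon> ^ D \<le> 0"
          using nonneg[of \<epsilon>] by (simp add: divide_nonneg_neg)
        then show "Im (- (f \<epsilon> / of_real \<epsilon> ^ D)) = 0 \<and> 0 \<le> Re (- (f \<epsilon> / of_real \<epsilon> ^ D))"
          unfolding real by simp
      qed
    qed simp
    with L_nonneg that show False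
      by (simp add: complex_eq_iff)
  qed
qed

lemma lowest_order_coeff_nonneg:
  fixes T :: "nat \<Rightarrow> 'a \<Rightarrow> complex"
  assumes nonneg: "\<And>t \<epsilon>. Im (\<Sum>d\<le>K. T d t * of_real \<epsilon> ^ d) = 0 \<and> 0 \<le> Re (\<Sum>d\<le>K. T d t * of_real \<epsilon> ^ d)"
    and nonzero: "T d0 t0 \<noteq> 0" "d0 \<le> K"
  obtains m where "\<And>t. Im (T (2 * m) t) = 0 \<and> 0 \<le> Re (T (2 * m) t)" and "\<exists>t. T (2 * m) t \<noteq> 0"
    and "\<And>t. ((\<lambda>\<epsilon>::real. (\<Sum>d\<le>K. T d t * of_real \<epsilon> ^ d) / of_real \<epsilon> ^ (2 * m)) \<longlongrightarrow> T (2 * m) t) (at 0)"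
proof -
  define D where "D = (LEAST d. \<exists>t. T d t \<noteq> 0)"
  obtain t1 where t1: "T D t1 \<noteq> 0"
    unfolding D_def using LeastI[of "\<lambda>d. \<exists>t. T d t \<noteq> 0", OF exI, OF nonzero(1)] by blast
  have "D \<le> K"
    unfolding D_def using Least_le[of "\<lambda>d. \<exists>t. T d t \<noteq> 0", OF exI, OF nonzero(1)] nonzero(2) by linarith
  have "T d t = 0" if "d < D" for d t
    using not_less_Least[of d "\<lambda>d. \<exists>t. T d t \<noteq> 0"] that unfolding D_def by blast
  then have lim: "((\<lambda>\<epsilon>::real. (\<Sum>d\<le>K. T d t * of_real \<epsilon> ^ d) / of_real \<epsilon> ^ D) \<longlongrightarrow> T D t) (at 0)" for t
    using \<open>D \<le> K\<close> by (intro tendsto_sum_powers_div_lowest)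
  obtain m where "D = 2 * m"
    using limit_div_power_of_nonneg(2)[OF lim nonneg t1] by (metis evenE)
  then show ?thesis
    using that limit_div_power_of_nonneg(1)[OF lim nonneg] t1 lim by blast
qed

lemma leading_coeff_identity:
  assumes idt: "\<And>z. herm_eval n r z z * B z = of_real (map_normsq n N F z)"
    and B: "((\<lambda>\<epsilon>::real. B (pert zm c t (of_real \<epsilon>)) / of_real \<epsilon> ^ (2 * m)) \<longlongrightarrow> b) (at 0)"
  shows "herm_eval n r (\<lambda>i. poly (zm i) t) (\<lambda>i. poly (zm i) t) * b =
    of_real (\<Sum>j<N. (cmod (poly (coeff (pert_poly n (F j) zm c) m) t))\<^sup>2)"
proof -
  have "of_real (\<Sum>j<N. (cmod (coeff (map_poly (\<lambda>q. poly q t) (pert_poly n (F j) zm c)) m))\<^sup>2) =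
      herm_eval n r (\<lambda>i. poly (zm i) t) (\<lambda>i. poly (zm i) t) * b"
  proof (rule normsq_coeff_eq_limit_product[OF tendsto_herm_eval_pert B])
    show "herm_eval n r (pert zm c t (of_real \<epsilon>)) (pert zm c t (of_real \<epsilon>)) * B (pert zm c t (of_real \<epsilon>)) =
        of_real (\<Sum>j<N. (cmod (poly (map_poly (\<lambda>q. poly q t) (pert_poly n (F j) zm c)) (of_real \<epsilon>)))\<^sup>2)" for \<epsilon>
      unfolding idt map_normsq_def poly_pert_poly ..
  qed
  then show ?thesis
    by (simp add: coeff_map_poly_eval)
qed

lemma least_order_in_family:
  fixes P :: "nat \<Rightarrow> 'a::zero poly"
  assumes "j0 < M" "P j0 \<noteq> 0"
  obtains m j1 where "\<And>j k. j < M \<Longrightarrow> k < m \<Longrightarrow> coeff (P j) k = 0" and "j1 < M" "coeff (P j1) m \<noteq> 0"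
proof -
  obtain k where "coeff (P j0) k \<noteq> 0"
    using assms(2) poly_eqI[of "P j0" 0] by fastforce
  define m where "m = (LEAST k. \<exists>j<M. coeff (P j) k \<noteq> 0)"
  have "\<exists>j<M. coeff (P j) k \<noteq> 0"
    using \<open>coeff (P j0) k \<noteq> 0\<close> assms(1) by blast
  then have "\<exists>j<M. coeff (P j) m \<noteq> 0"
    unfolding m_def by (rule LeastI)
  then obtain j1 where "j1 < M" "coeff (P j1) m \<noteq> 0"
    by blast
  moreover have "coeff (P j) k = 0" if "j < M" "k < m" for j k
    using not_less_Least[of k "\<lambda>k. \<exists>j<M. coeff (P j) k \<noteq> 0"] that unfolding m_def by blast
  ultimately show ?thesis
    by (rule that[rotated])
qed

lemma pullback_Qcl:
  assumes pb: "is_pullback n r zm q" and "Qcl n r"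
  shows "Qcl 1 q"
proof -
  obtain N F M G where "is_hpoly_map n N F" "is_hpoly_map n M G"
    and "\<exists>p. map_normsq n M G p \<noteq> 0"
    and idt: "\<And>z. herm_eval n r z z * of_real (map_normsq n M G z) = of_real (map_normsq n N F z)"
    using assms(2) unfolding Qcl_def by blast
  then obtain p j0 where j0: "j0 < M" "hpoly_eval n (G j0) p \<noteq> 0"
    unfolding map_normsq_def by (metis (no_types, lifting) lessThan_iff norm_zero power_zero_numeral sum.neutral)
  \<comment> \<open>Move the curve so that it passes through \<open>p\<close> at \<open>t = 0\<close>, \<open>\<epsilon> = 1\<close>.\<close>
  define c where "c i = p i - poly (zm i) 0" for i
  define Gb where "Gb j = pert_poly n (G j) zm c" for j
  have "poly (map_poly (\<lambda>q. poly q 0) (Gb j0)) 1 \<noteq> 0"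
    using j0(2) unfolding Gb_def poly_pert_poly by (simp add: pert_def c_def)
  then have "Gb j0 \<noteq> 0"
    by (metis map_poly_0 poly_0)
  then obtain m j1 where below: "\<And>j k. j < M \<Longrightarrow> k < m \<Longrightarrow> coeff (Gb j) k = 0"
    and j1: "j1 < M" "coeff (Gb j1) m \<noteq> 0"
    by (rule least_order_in_family[OF j0(1)]) (rule that)
  obtain t0 where t0: "poly (coeff (Gb j1) m) t0 \<noteq> 0"
    using j1(2) poly_all_0_iff_0 by blast
  define G' where "G' j = hpoly_of_poly (coeff (Gb j) m)" for j
  define F' where "F' j = hpoly_of_poly (coeff (pert_poly n (F j) zm c) m)" for j
  have "map_normsq 1 M G' (\<lambda>_. t0) \<noteq> 0"
  proof -
    have "0 < (cmod (poly (coeff (Gb j1) m) t0))\<^sup>2"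
      using t0 by simp
    also have "\<dots> \<le> map_normsq 1 M G' (\<lambda>_. t0)"
      unfolding G'_def map_normsq_hpoly_of_poly using j1(1) by (intro member_le_sum) auto
    finally show ?thesis
      by simp
  qed
  moreover have "herm_eval 1 q z z * of_real (map_normsq 1 M G' z) = of_real (map_normsq 1 N F' z)" for z
  proof -
    have "((\<lambda>\<epsilon>::real. of_real ((\<Sum>j<M. (cmod (poly (map_poly (\<lambda>q. poly q (z 0)) (Gb j)) (of_real \<epsilon>)))\<^sup>2) / \<epsilon> ^ (2 * m)))
        \<longlongrightarrow> complex_of_real (\<Sum>j<M. (cmod (coeff (map_poly (\<lambda>q. poly q (z 0)) (Gb j)) m))\<^sup>2)) (at 0)"
      by (intro tendsto_of_real tendsto_normsq_div_power) (simp add: coeff_map_poly_eval below)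
    then have "((\<lambda>\<epsilon>::real. complex_of_real (map_normsq n M G (pert zm c (z 0) (of_real \<epsilon>))) / of_real \<epsilon> ^ (2 * m))
        \<longlongrightarrow> complex_of_real (map_normsq 1 M G' z)) (at 0)"
      by (simp add: G'_def Gb_def map_normsq_def poly_pert_poly coeff_map_poly_eval)
    from leading_coeff_identity[OF idt this] show ?thesis
      unfolding pullback_eval[OF pb] F'_def map_normsq_hpoly_of_poly by simp
  qed
  moreover have "is_hpoly_map 1 N F'" "is_hpoly_map 1 M G'"
    unfolding F'_def G'_def by (rule is_hpoly_map_hpoly_of_poly)+
  moreover have "is_herm 1 q"
    using pb by (simp add: is_pullback_def)
  ultimately show ?thesis
    unfolding Qcl_def by blast
qed

lemma pullback_Qcl':
  assumes pb: "is_pullback n r zm q" and "Qcl' n r"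
  shows "Qcl' 1 q"
proof -
  obtain s N F \<alpha>0 \<beta>0 where Ps: "Pk 1 n s" and nonzero: "s \<alpha>0 \<beta>0 \<noteq> 0" and "is_hpoly_map n N F"
    and idt: "\<And>z. herm_eval n r z z * herm_eval n s z z = of_real (map_normsq n N F z)"
    using assms(2) unfolding Qcl'_def by blast
  have herm: "is_herm n s" and s_nonneg: "\<And>p. Im (herm_eval n s p p) = 0 \<and> 0 \<le> Re (herm_eval n s p p)"
    using Ps unfolding Pk_one_iff by blast+
  obtain p where p: "herm_eval n s p p \<noteq> 0"
    using herm_diag_nonzero[of n s \<alpha>0 \<beta>0] herm nonzero by blast
  define c where "c i = p i - poly (zm i) 0" for i
  obtain S K where S: "\<And>d. is_herm 1 (S d)"
    and expand: "\<And>t \<epsilon>. herm_eval n s (pert zm c t (of_real \<epsilon>)) (pert zm c t (of_real \<epsilon>)) =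
                  (\<Sum>d\<le>K. herm_eval 1 (S d) (\<lambda>_. t) (\<lambda>_. t) * of_real \<epsilon> ^ d)"
    by (rule herm_eval_pert_expansion[OF herm, where zm = zm and c = c]) (rule that)
  define T where "T d t = herm_eval 1 (S d) (\<lambda>_. t) (\<lambda>_. t)" for d t
  have "(\<Sum>d\<le>K. T d 0 * of_real 1 ^ d) \<noteq> 0"
    using p expand[of 0 1] by (simp add: T_def pert_def c_def)
  then obtain d0 where d0: "d0 \<le> K" "T d0 0 \<noteq> 0"
    by (metis (no_types, lifting) atMost_iff mult_zero_left sum.neutral)
  have T_sum_nonneg: "Im (\<Sum>d\<le>K. T d t * of_real \<epsilon> ^ d) = 0 \<and> 0 \<le> Re (\<Sum>d\<le>K. T d t * of_real \<epsilon> ^ d)" for t \<epsilon>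
    unfolding T_def expand[symmetric] by (rule s_nonneg)
  obtain m where T_nonneg: "\<And>t. Im (T (2 * m) t) = 0 \<and> 0 \<le> Re (T (2 * m) t)"
    and "\<exists>t. T (2 * m) t \<noteq> 0"
    and T_lim: "\<And>t. ((\<lambda>\<epsilon>::real. (\<Sum>d\<le>K. T d t * of_real \<epsilon> ^ d) / of_real \<epsilon> ^ (2 * m)) \<longlongrightarrow> T (2 * m) t) (at 0)"
    by (rule lowest_order_coeff_nonneg[where K = K and T = T, OF T_sum_nonneg d0(2,1)]) (rule that)
  define F' where "F' j = hpoly_of_poly (coeff (pert_poly n (F j) zm c) m)" for j
  have diag: "herm_eval 1 (S (2 * m)) z z = T (2 * m) (z 0)" for z
    unfolding T_def by (rule herm_eval_one_cong)
  have "Pk 1 1 (S (2 * m))"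
    unfolding Pk_one_iff diag using S T_nonneg by blast
  moreover have "\<exists>\<alpha> \<beta>. S (2 * m) \<alpha> \<beta> \<noteq> 0"
  proof (rule ccontr)
    assume "\<not> (\<exists>\<alpha> \<beta>. S (2 * m) \<alpha> \<beta> \<noteq> 0)"
    then have "T (2 * m) t = 0" for t
      unfolding T_def herm_eval_def by simp
    with \<open>\<exists>t. T (2 * m) t \<noteq> 0\<close> show False
      by blast
  qed
  moreover have "is_hpoly_map 1 N F'"
    unfolding F'_def by (rule is_hpoly_map_hpoly_of_poly)
  moreover have "herm_eval 1 q z z * herm_eval 1 (S (2 * m)) z z = of_real (map_normsq 1 N F' z)" for z
    using leading_coeff_identity[where B = "\<lambda>z. herm_eval n s z z", OF idt, of zm c "z 0" m]
    unfolding pullback_eval[OF pb] diag F'_def map_normsq_hpoly_of_poly expand T_def[symmetric]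
    using T_lim by blast
  moreover have "Pk 1 1 q"
    using pb assms(2) unfolding Qcl'_def by (blast intro: pullback_Pk)
  ultimately show ?thesis
    unfolding Qcl'_def by blast
qed

theorem lemma2p1:
  fixes n :: nat and r :: "mindex \<Rightarrow> mindex \<Rightarrow> complex" and zm :: "nat \<Rightarrow> complex poly"
  assumes "is_herm n r"
  shows "(\<exists>q. is_pullback n r zm q) \<and>
    (\<forall>q. is_pullback n r zm q \<longrightarrow>
       (Qcl n r \<longrightarrow> Qcl 1 q) \<and>
       (Qcl' n r \<longrightarrow> Qcl' 1 q) \<and>
       (\<forall>k\<ge>1. Pk k n r \<longrightarrow> Pk k 1 q) \<and>
       (Pinf n r \<longrightarrow> Pinf 1 q))"
  using pullback_exists[OF assms] pullback_Qcl pullback_Qcl' pullback_Pk pullback_Pinf by blast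

end
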